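(* (a) For an integer $k\ge2$, let $P_k(x)=-\left(x+\frac{k-1}{2}\right)\left(x-\frac{k-1}{2}\right)\prod_{i=1}^{k-1}\left(x-\left(i-\frac k2\right)\right)^2$, $r_0=\frac{1-k}{2}$, $r_1=\frac{k-1}{2}$, $Z_k=(X_k,Y_k)$ with $X_k(x,y)=(1,P_k'(x))$ for $y\ge0$, $Y_k(x,y)=(-1,P_k'(x))$ for $y\le0$, and $\Lambda_k=\{(x,P_k(x)):r_0\le x\le r_1\}\cup\{(x,-P_k(x)):r_0\le x\le r_1\}$. Then $\Lambda_k$ is an invariant set for $Z_k$. (b) Let $Z_\infty$ have $X_\infty(x,y)=(1,2\sin(2\pi x))$ for $y\ge0$, $Y_\infty(x,y)=(-1,2\sin(2\pi x))$ for $y\le0$, and $\Lambda_\infty=\{(x,\pm P_\infty(x)):x\in\mathbb{R}\}$ with $P_\infty(x)=\frac{1-\cos(2\pi x)}{\pi}$. Then $\Lambda_\infty$ is an invariant set for $Z_\infty$.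
   Context: Switching manifold $\Sigma=\{y=0\}=f^{-1}(0)$, $f(x,y)=y$; a PSVF $Z=(X,Y)$ uses $X$ on $\{y\ge0\}$, $Y$ on $\{y\le0\}$. With $Wf=\langle\nabla f,W\rangle$, $W^2f=\langle\nabla(Wf),W\rangle$: crossing region $\Sigma^c=\{Xf\cdot Yf>0\}$ ($\Sigma^{c+}$ both $>0$, $\Sigma^{c-}$ both $<0$), sliding $\Sigma^s=\{Xf<0<Yf\}$, escaping $\Sigma^e=\{Yf<0<Xf\}$, sliding field $Z^T=(Yf\,X-Xf\,Y)/(Yf-Xf)$ on their closure. Tangential singularities: points of $\Sigma$ with $Xf=0$ or $Yf=0$; singular if invisible for both fields ($X^2f<0$ and $Y^2f>0$), regular otherwise. Local trajectories (Filippov convention): off $\Sigma$ follow $X$ or $Y$; through $\Sigma^{c+}$ follow $Y$ for $t\le0$ and $X$ for $t\ge0$ (reversed for $\Sigma^{c-}$); through $\Sigma^e$ follow $Z^T$ for $t\le0$ and one of $X,Y,Z^T$ for $t\ge0$ (reversed for $\Sigma^s$); through a regular tangency follow one of the flows of $X,Y,Z^T$ for $t\le0$ and one of them for $t\ge0$; singular tangencies are stationary. A global trajectory is a map $\gamma:\mathbb{R}\to\mathbb{R}^2$ concatenating orientation-preserving local trajectories $\sigma_i$ on $[t_i,t_{i+1}]$, $i\in\mathbb{Z}$, with $\sigma_i(t_{i+1})=\sigma_{i+1}(t_{i+1})$ and $t_i\to\pm\infty$. A set $\Lambda$ is invariant for $Z$ if every global trajectory $\gamma$ of $Z$ with $\gamma(0)\in\Lambda$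 satisfies $\gamma(\mathbb{R})\subset\Lambda$. *)

theory Defs
  imports "HOL-Analysis.Analysis"
begin

type_synonym R2 = "real \<times> real"
type_synonym vf = "R2 \<Rightarrow> R2"

definition sw_f :: "R2 \<Rightarrow> real" where "sw_f p = snd p"
definition Sigma :: "R2 set" where "Sigma = {p. sw_f p = 0}"

text \<open>Lie derivatives: Wf = <grad f, W>, W^2 f = <grad (Wf), W>.\<close>
definition Lf :: "vf \<Rightarrow> R2 \<Rightarrow> real" where
  "Lf W p = snd (W p)"   (* grad f = (0,1) *)
definition L2f :: "vf \<Rightarrow> R2 \<Rightarrow> real" where
  "L2f W p = frechet_derivative (Lf W) (at p) (W p)"

definition crossing_plus :: "vf \<Rightarrow> vf \<Rightarrow> R2 set" where
  "crossing_plus X Y = {p \<in> Sigma. Lf X p > 0 \<and> Lf Y p > 0}"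
definition crossing_minus :: "vf \<Rightarrow> vf \<Rightarrow> R2 set" where
  "crossing_minus X Y = {p \<in> Sigma. Lf X p < 0 \<and> Lf Y p < 0}"
definition sliding :: "vf \<Rightarrow> vf \<Rightarrow> R2 set" where
  "sliding X Y = {p \<in> Sigma. Lf X p < 0 \<and> 0 < Lf Y p}"
definition escaping :: "vf \<Rightarrow> vf \<Rightarrow> R2 set" where
  "escaping X Y = {p \<in> Sigma. Lf Y p < 0 \<and> 0 < Lf X p}"

definition sliding_field :: "vf \<Rightarrow> vf \<Rightarrow> vf" where
  "sliding_field X Y p =
     (1 / (Lf Y p - Lf X p)) *\<^sub>R (Lf Y p *\<^sub>R X p - Lf X p *\<^sub>R Y p)"

definition tangency :: "vf \<Rightarrow> vf \<Rightarrow> R2 set" where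
  "tangency X Y = {p \<in> Sigma. Lf X p = 0 \<or> Lf Y p = 0}"
definition singular_tangency :: "vf \<Rightarrow> vf \<Rightarrow> R2 set" where
  "singular_tangency X Y = {p \<in> tangency X Y. L2f X p < 0 \<and> L2f Y p > 0}"
definition regular_tangency :: "vf \<Rightarrow> vf \<Rightarrow> R2 set" where
  "regular_tangency X Y = tangency X Y - singular_tangency X Y"

definition solution_in :: "vf \<Rightarrow> R2 set \<Rightarrow> (real \<Rightarrow> R2) \<Rightarrow> real \<Rightarrow> real \<Rightarrow> bool" where
  "solution_in W S \<sigma> a b \<longleftrightarrow>
     (\<forall>t\<in>{a..b}. (\<sigma> has_vector_derivative W (\<sigma> t)) (at t within {a..b}) \<and> \<sigma> t \<in> S)"

datatype flow_choice = FX | FY | FT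

definition follows :: "vf \<Rightarrow> vf \<Rightarrow> flow_choice \<Rightarrow> (real \<Rightarrow> R2) \<Rightarrow> real \<Rightarrow> real \<Rightarrow> bool" where
  "follows X Y F \<sigma> a b = (case F of
       FX \<Rightarrow> solution_in X {p. sw_f p \<ge> 0} \<sigma> a b
     | FY \<Rightarrow> solution_in Y {p. sw_f p \<le> 0} \<sigma> a b
     | FT \<Rightarrow> solution_in (sliding_field X Y) (closure (sliding X Y \<union> escaping X Y)) \<sigma> a b)"

text \<open>Local trajectory (Filippov convention) on [a,b] passing at time tau through p = sigma tau.\<close>
definition local_trajectory :: "vf \<Rightarrow> vf \<Rightarrow> (real \<Rightarrow> R2) \<Rightarrow> real \<Rightarrow> real \<Rightarrow> bool" where
  "local_trajectory X Y \<sigma> a b \<longleftrightarrow> (\<exists>\<tau>\<in>{a..b}.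
     (sw_f (\<sigma> \<tau>) > 0 \<and> follows X Y FX \<sigma> a b) \<or>
     (sw_f (\<sigma> \<tau>) < 0 \<and> follows X Y FY \<sigma> a b) \<or>
     (\<sigma> \<tau> \<in> crossing_plus X Y \<and> follows X Y FY \<sigma> a \<tau> \<and> follows X Y FX \<sigma> \<tau> b) \<or>
     (\<sigma> \<tau> \<in> crossing_minus X Y \<and> follows X Y FX \<sigma> a \<tau> \<and> follows X Y FY \<sigma> \<tau> b) \<or>
     (\<sigma> \<tau> \<in> escaping X Y \<and> follows X Y FT \<sigma> a \<tau> \<and> (\<exists>F. follows X Y F \<sigma> \<tau> b)) \<or>
     (\<sigma> \<tau> \<in> sliding X Y \<and> (\<exists>F. follows X Y F \<sigma> a \<tau>) \<and> follows X Y FT \<sigma> \<tau> b) \<or>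
     (\<sigma> \<tau> \<in> regular_tangency X Y \<and> (\<exists>F. follows X Y F \<sigma> a \<tau>) \<and> (\<exists>G. follows X Y G \<sigma> \<tau> b)) \<or>
     (\<sigma> \<tau> \<in> singular_tangency X Y \<and> (\<forall>t\<in>{a..b}. \<sigma> t = \<sigma> \<tau>)))"

definition global_trajectory :: "vf \<Rightarrow> vf \<Rightarrow> (real \<Rightarrow> R2) \<Rightarrow> bool" where
  "global_trajectory X Y \<gamma> \<longleftrightarrow> (\<exists>(t :: int \<Rightarrow> real) (\<sigma> :: int \<Rightarrow> real \<Rightarrow> R2).
     (\<forall>i. t i < t (i + 1)) \<and>
     filterlim t at_top at_top \<and> filterlim t at_bot at_bot \<and>
     (\<forall>i. local_trajectory X Y (\<sigma> i) (t i) (t (i + 1))) \<and>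
     (\<forall>i. \<sigma> i (t (i + 1)) = \<sigma> (i + 1) (t (i + 1))) \<and>
     (\<forall>i. \<forall>s\<in>{t i..t (i + 1)}. \<gamma> s = \<sigma> i s))"

definition invariant_set :: "vf \<Rightarrow> vf \<Rightarrow> R2 set \<Rightarrow> bool" where
  "invariant_set X Y \<Lambda> \<longleftrightarrow>
     (\<forall>\<gamma>. global_trajectory X Y \<gamma> \<and> \<gamma> 0 \<in> \<Lambda> \<longrightarrow> range \<gamma> \<subseteq> \<Lambda>)"

definition Pk :: "nat \<Rightarrow> real \<Rightarrow> real" where
  "Pk k x = - (x + (real k - 1) / 2) * (x - (real k - 1) / 2) *
     (\<Prod>i\<in>{1..k-1}. (x - (real i - real k / 2)) ^ 2)"
definition Xk :: "nat \<Rightarrow> vf" where "Xk k p = (1, deriv (Pk k) (fst p))"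
definition Yk :: "nat \<Rightarrow> vf" where "Yk k p = (-1, deriv (Pk k) (fst p))"
definition Lambdak :: "nat \<Rightarrow> R2 set" where
  "Lambdak k = {(x, Pk k x) | x. (1 - real k) / 2 \<le> x \<and> x \<le> (real k - 1) / 2}
             \<union> {(x, - Pk k x) | x. (1 - real k) / 2 \<le> x \<and> x \<le> (real k - 1) / 2}"

definition Pinf :: "real \<Rightarrow> real" where "Pinf x = (1 - cos (2 * pi * x)) / pi"
definition Xinf :: vf where "Xinf p = (1, 2 * sin (2 * pi * fst p))"
definition Yinf :: vf where "Yinf p = (-1, 2 * sin (2 * pi * fst p))"
definition Lambdainf :: "R2 set" where
  "Lambdainf = {(x, Pinf x) | x. True} \<union> {(x, - Pinf x) | x. True}"

end

theory Submission
  imports Defs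
begin

text \<open>Both fields have vertical component \<open>P'(x)\<close>, so \<open>Xf = Yf\<close> on \<open>\<Sigma>\<close>: there is no
  sliding or escaping region, and every Filippov trajectory is a concatenation of arcs of \<open>X\<close>
  in \<open>y \<ge> 0\<close>, arcs of \<open>Y\<close> in \<open>y \<le> 0\<close> and stationary pieces. Along \<open>X\<close> the function
  \<open>y - P(x)\<close> is a first integral and along \<open>Y\<close> so is \<open>-y - P(x)\<close>, and \<open>\<Lambda>\<close> is the union of
  their zero sets in the respective half planes. Hence an arc that touches \<open>\<Lambda>\<close> once lies
  entirely in \<open>\<Lambda>\<close>, and this passes from arc to arc along a global trajectory.\<close>

definition slope_field :: "real \<Rightarrow> (real \<Rightarrow> real) \<Rightarrow> vf" where
  "slope_field e D p = (e, D (fst p))"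

text \<open>The constraint \<open>P x \<ge> 0\<close> is what cuts \<open>\<Lambda>\<^sub>k\<close> down to \<open>r\<^sub>0 \<le> x \<le> r\<^sub>1\<close>
  (see \<open>Pk_nonneg_iff\<close>); \<open>P\<^sub>\<infinity>\<close> is nonnegative everywhere.\<close>

definition mirrored_graph :: "(real \<Rightarrow> real) \<Rightarrow> R2 set" where
  "mirrored_graph P = {(x, P x) | x. P x \<ge> 0} \<union> {(x, - P x) | x. P x \<ge> 0}"

lemma slope_field_first_integral:
  assumes P: "\<And>x. (P has_real_derivative D x) (at x)"
    and sol: "solution_in (slope_field e D) S \<sigma> a b"
  shows "\<exists>h. \<forall>t\<in>{a..b}. e * snd (\<sigma> t) - P (fst (\<sigma> t)) = h"
proof (rule has_field_derivative_zero_constant)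
  fix t assume t: "t \<in> {a..b}"
  have \<sigma>': "(\<sigma> has_vector_derivative (e, D (fst (\<sigma> t)))) (at t within {a..b})"
    using sol t by (auto simp: solution_in_def slope_field_def)
  have x': "((\<lambda>t. fst (\<sigma> t)) has_real_derivative e) (at t within {a..b})"
    using bounded_linear.has_vector_derivative[OF bounded_linear_fst \<sigma>']
    by (simp add: has_real_derivative_iff_has_vector_derivative)
  have y': "((\<lambda>t. snd (\<sigma> t)) has_real_derivative D (fst (\<sigma> t))) (at t within {a..b})"
    using bounded_linear.has_vector_derivative[OF bounded_linear_snd \<sigma>']
    by (simp add: has_real_derivative_iff_has_vector_derivative)
  show "((\<lambda>t. e * snd (\<sigma> t) - P (fst (\<sigma> t))) has_real_derivative 0) (at t within {a..b})"
    using DERIV_diff[OF DERIV_cmult[OF y', of e] DERIV_chain2[OF P x']] by simp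
qed simp

lemma sliding_slope_fields: "sliding (slope_field 1 D) (slope_field (-1) D) = {}"
  and escaping_slope_fields: "escaping (slope_field 1 D) (slope_field (-1) D) = {}"
  by (auto simp: sliding_def escaping_def Lf_def slope_field_def)

lemma mem_mirrored_graph_half_plane:
  assumes "\<bar>e\<bar> = 1" "0 \<le> e * snd p"
  shows "p \<in> mirrored_graph P \<longleftrightarrow> e * snd p = P (fst p)"
  using assms by (cases p) (auto simp: mirrored_graph_def abs_if split: if_splits)

lemma half_plane_solution_mirrored_graph:
  assumes P: "\<And>x. (P has_real_derivative D x) (at x)" and e: "\<bar>e\<bar> = 1"
    and sol: "solution_in (slope_field e D) {p. 0 \<le> e * snd p} \<sigma> a b"
    and c: "c \<in> {a..b}" "\<sigma> c \<in> mirrored_graph P"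
  shows "\<sigma> ` {a..b} \<subseteq> mirrored_graph P"
proof -
  have half: "0 \<le> e * snd (\<sigma> t)" if "t \<in> {a..b}" for t
    using sol that by (auto simp: solution_in_def)
  obtain h where h: "\<And>t. t \<in> {a..b} \<Longrightarrow> e * snd (\<sigma> t) - P (fst (\<sigma> t)) = h"
    using slope_field_first_integral[OF P sol] by blast
  have "h = 0"
    using h[OF c(1)] c mem_mirrored_graph_half_plane[OF e half[OF c(1)]] by simp
  then show ?thesis
    using h half mem_mirrored_graph_half_plane[OF e] by (simp add: image_subset_iff)
qed

lemma follows_slope_fields_mirrored_graph:
  assumes P: "\<And>x. (P has_real_derivative D x) (at x)"
    and F: "follows (slope_field 1 D) (slope_field (-1) D) F \<sigma> a b"
    and c: "c \<in> {a..b}" "\<sigma> c \<in> mirrored_graph P"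
  shows "\<sigma> ` {a..b} \<subseteq> mirrored_graph P"
proof (cases F)
  case FX
  then have "solution_in (slope_field 1 D) {p. 0 \<le> 1 * snd p} \<sigma> a b"
    using F by (simp add: follows_def sw_f_def)
  then show ?thesis using half_plane_solution_mirrored_graph[OF P, of 1] c by simp
next
  case FY
  then have "solution_in (slope_field (-1) D) {p. 0 \<le> -1 * snd p} \<sigma> a b"
    using F by (simp add: follows_def sw_f_def)
  then show ?thesis using half_plane_solution_mirrored_graph[OF P, of "-1"] c by simp
next
  case FT
  then show ?thesis
    using F c by (simp add: follows_def solution_in_def sliding_slope_fields escaping_slope_fields)
qed

lemma image_subset_interval_split:
  fixes \<sigma> :: "real \<Rightarrow> 'a"
  assumes left: "\<And>c. c \<in> {a..\<tau>} \<Longrightarrow> \<sigma> c \<in> \<Lambda> \<Longrightarrow> \<sigma> ` {a..\<tau>} \<subseteq> \<Lambda>"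
    and right: "\<And>c. c \<in> {\<tau>..b} \<Longrightarrow> \<sigma> c \<in> \<Lambda> \<Longrightarrow> \<sigma> ` {\<tau>..b} \<subseteq> \<Lambda>"
    and \<tau>: "\<tau> \<in> {a..b}" and c: "c \<in> {a..b}" "\<sigma> c \<in> \<Lambda>"
  shows "\<sigma> ` {a..b} \<subseteq> \<Lambda>"
proof -
  have "\<sigma> \<tau> \<in> \<Lambda>"
  proof (cases "c \<le> \<tau>")
    case True
    then have "\<sigma> ` {a..\<tau>} \<subseteq> \<Lambda>" using left[of c] c by simp
    then show ?thesis using \<tau> by (auto simp: image_subset_iff)
  next
    case False
    then have "\<sigma> ` {\<tau>..b} \<subseteq> \<Lambda>" using right[of c] c by simp
    then show ?thesis using \<tau> by (auto simp: image_subset_iff)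
  qed
  then have "\<sigma> ` ({a..\<tau>} \<union> {\<tau>..b}) \<subseteq> \<Lambda>"
    using left[of \<tau>] right[of \<tau>] \<tau> by auto
  moreover have "{a..\<tau>} \<union> {\<tau>..b} = {a..b}"
    using \<tau> by auto
  ultimately show ?thesis by simp
qed

lemma local_trajectory_slope_fields_mirrored_graph:
  assumes P: "\<And>x. (P has_real_derivative D x) (at x)"
    and \<sigma>: "local_trajectory (slope_field 1 D) (slope_field (-1) D) \<sigma> a b"
    and c: "c \<in> {a..b}" "\<sigma> c \<in> mirrored_graph P"
  shows "\<sigma> ` {a..b} \<subseteq> mirrored_graph P"
proof -
  let ?follows = "follows (slope_field 1 D) (slope_field (-1) D)"
  obtain \<tau> where \<tau>: "\<tau> \<in> {a..b}" and
    "(\<exists>F. ?follows F \<sigma> a b) \<or> (\<exists>F G. ?follows F \<sigma> a \<tau> \<and> ?follows G \<sigma> \<tau> b) \<or>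
      (\<forall>t\<in>{a..b}. \<sigma> t = \<sigma> \<tau>)"
    using \<sigma> unfolding local_trajectory_def sliding_slope_fields escaping_slope_fields by blast
  then consider
      F where "?follows F \<sigma> a b"
    | F G where "?follows F \<sigma> a \<tau>" "?follows G \<sigma> \<tau> b"
    | "\<forall>t\<in>{a..b}. \<sigma> t = \<sigma> \<tau>"
    by blast
  then show ?thesis
  proof cases
    case 1
    then show ?thesis using follows_slope_fields_mirrored_graph[OF P] c by blast
  next
    case 2
    show ?thesis
    proof (rule image_subset_interval_split)
      show "\<sigma> ` {a..\<tau>} \<subseteq> mirrored_graph P"
        if "c' \<in> {a..\<tau>}" "\<sigma> c' \<in> mirrored_graph P" for c'
        using follows_slope_fields_mirrored_graph[OF P 2(1) that] .
      show "\<sigma> ` {\<tau>..b} \<subseteq> mirrored_graph P"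
        if "c' \<in> {\<tau>..b}" "\<sigma> c' \<in> mirrored_graph P" for c'
        using follows_slope_fields_mirrored_graph[OF P 2(2) that] .
    qed (use \<tau> c in auto)
  next
    case 3
    then show ?thesis using c by (metis image_subset_iff)
  qed
qed

lemma unbounded_int_partition_covers:
  fixes t :: "int \<Rightarrow> real"
  assumes "filterlim t at_top at_top" "filterlim t at_bot at_bot"
  obtains i where "t i \<le> s" "s \<le> t (i + 1)"
proof -
  have "eventually (\<lambda>j. t j \<le> s) at_bot"
    using assms(2) by (simp add: filterlim_at_bot)
  then obtain j0 where j0: "t j0 \<le> s"
    by (auto simp: eventually_at_bot_linorder)
  have "eventually (\<lambda>j. s < t j) at_top"
    using assms(1) by (simp add: filterlim_at_top_dense)
  then obtain J where J: "\<And>j. j \<ge> J \<Longrightarrow> s < t j"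
    by (auto simp: eventually_at_top_linorder)
  have "s < t (j0 + int (nat (J - j0)))"
    using J by simp
  from ex_least_nat_less[where P = "\<lambda>n. s < t (j0 + int n)", OF this] j0
  obtain n where "\<forall>m\<le>n. \<not> s < t (j0 + int m)" "s < t (j0 + int (Suc n))"
    by auto
  then have "t (j0 + int n) \<le> s" "s \<le> t (j0 + int n + 1)"
    by (auto simp: ac_simps)
  then show ?thesis by (rule that)
qed

lemma invariant_setI_local_trajectories:
  assumes local: "\<And>\<sigma> a b c. local_trajectory X Y \<sigma> a b \<Longrightarrow> c \<in> {a..b} \<Longrightarrow> \<sigma> c \<in> \<Lambda> \<Longrightarrow>
      \<sigma> ` {a..b} \<subseteq> \<Lambda>"
  shows "invariant_set X Y \<Lambda>"
  unfolding invariant_set_def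
proof (intro allI impI)
  fix \<gamma> assume "global_trajectory X Y \<gamma> \<and> \<gamma> 0 \<in> \<Lambda>"
  then obtain t :: "int \<Rightarrow> real" and \<sigma> :: "int \<Rightarrow> real \<Rightarrow> R2"
    where mono: "\<And>i. t i < t (i + 1)"
      and top: "filterlim t at_top at_top" and bot: "filterlim t at_bot at_bot"
      and \<sigma>: "\<And>i. local_trajectory X Y (\<sigma> i) (t i) (t (i + 1))"
      and junction: "\<And>i. \<sigma> i (t (i + 1)) = \<sigma> (i + 1) (t (i + 1))"
      and \<gamma>: "\<And>i s. s \<in> {t i..t (i + 1)} \<Longrightarrow> \<gamma> s = \<sigma> i s"
      and \<gamma>0: "\<gamma> 0 \<in> \<Lambda>"
    unfolding global_trajectory_def by blast
  have piece: "\<sigma> i ` {t i..t (i + 1)} \<subseteq> \<Lambda>" if "\<sigma> i c \<in> \<Lambda>" "c \<in> {t i..t (i + 1)}" for i c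
    using local[OF \<sigma> that(2,1)] .
  obtain i0 where "0 \<in> {t i0..t (i0 + 1)}"
    using unbounded_int_partition_covers[OF top bot] by auto
  then have "\<sigma> i ` {t i..t (i + 1)} \<subseteq> \<Lambda>" for i
  proof (induction i rule: int_induct[of _ i0])
    case base
    then show ?case using piece \<gamma> \<gamma>0 by metis
  next
    case (step1 i)
    then have "\<sigma> i (t (i + 1)) \<in> \<Lambda>"
      using mono[of i] by (auto simp: image_subset_iff)
    then have "\<sigma> (i + 1) (t (i + 1)) \<in> \<Lambda>"
      by (simp add: junction)
    then show ?case using piece[of "i + 1" "t (i + 1)"] mono[of "i + 1"] by simp
  next
    case (step2 i)
    then have "\<sigma> i (t i) \<in> \<Lambda>"
      using mono[of i] by (auto simp: image_subset_iff)
    then have "\<sigma> (i - 1) (t i) \<in> \<Lambda>"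
      using junction[of "i - 1"] by simp
    then show ?case using piece[of "i - 1" "t i"] mono[of "i - 1"] by simp
  qed
  then show "range \<gamma> \<subseteq> \<Lambda>"
    using \<gamma> unbounded_int_partition_covers[OF top bot] by (metis atLeastAtMost_iff image_subset_iff)
qed

theorem mirrored_graph_invariant:
  assumes "\<And>x. (P has_real_derivative D x) (at x)"
  shows "invariant_set (slope_field 1 D) (slope_field (-1) D) (mirrored_graph P)"
  using local_trajectory_slope_fields_mirrored_graph[OF assms]
  by (intro invariant_setI_local_trajectories)

lemma Pk_has_derivative: "(Pk k has_real_derivative deriv (Pk k) x) (at x)"
proof -
  have "(\<lambda>x. \<Prod>i\<in>{1..k-1}. (x - (real i - real k / 2))\<^sup>2) differentiable at x"
    by (rule differentiableI, rule has_derivative_prod) (auto intro!: derivative_intros)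
  then have "Pk k differentiable at x"
    unfolding Pk_def by (intro differentiable_mult differentiable_minus differentiable_add
        differentiable_diff differentiable_const differentiable_ident)
  then show ?thesis by (simp add: DERIV_deriv_iff_real_differentiable)
qed

lemma Pk_nonneg_iff:
  assumes k: "k \<ge> 2"
  shows "0 \<le> Pk k x \<longleftrightarrow> (1 - real k) / 2 \<le> x \<and> x \<le> (real k - 1) / 2"
proof -
  define r where "r = (real k - 1) / 2"
  define Q where "Q = (\<Prod>i\<in>{1..k-1}. (x - (real i - real k / 2)) ^ 2)"
  have "Pk k x = - (x + r) * (x - r) * Q"
    by (simp add: Pk_def r_def Q_def)
  also have "\<dots> = (r\<^sup>2 - x\<^sup>2) * Q"
    by (simp add: algebra_simps power2_eq_square)
  finally have Pk: "Pk k x = (r\<^sup>2 - x\<^sup>2) * Q" .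
  have interval: "(1 - real k) / 2 \<le> x \<and> x \<le> (real k - 1) / 2 \<longleftrightarrow> \<bar>x\<bar> \<le> r"
    by (auto simp: r_def field_simps)
  have "0 \<le> r" using k by (simp add: r_def)
  have "0 \<le> Q" by (simp add: Q_def prod_nonneg)
  have Q_pos: "0 < Q" if "r < \<bar>x\<bar>"
    unfolding Q_def
  proof (rule prod_pos)
    fix i assume "i \<in> {1..k-1}"
    then have "1 \<le> real i" "real i + 1 \<le> real k" using k by auto
    then have "\<bar>real i - real k / 2\<bar> < r"
      by (simp add: r_def abs_less_iff field_simps)
    then show "0 < (x - (real i - real k / 2))\<^sup>2" using that by auto
  qed
  show ?thesis
    unfolding interval
  proof
    assume "0 \<le> Pk k x"
    show "\<bar>x\<bar> \<le> r"
    proof (rule ccontr)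
      assume "\<not> \<bar>x\<bar> \<le> r"
      then have "r < \<bar>x\<bar>" by simp
      then have "r\<^sup>2 < x\<^sup>2"
        using power_strict_mono[of r "\<bar>x\<bar>" 2] \<open>0 \<le> r\<close> by simp
      then have "Pk k x < 0"
        unfolding Pk using Q_pos[OF \<open>r < \<bar>x\<bar>\<close>] by (simp add: mult_neg_pos)
      then show False using \<open>0 \<le> Pk k x\<close> by simp
    qed
  next
    assume "\<bar>x\<bar> \<le> r"
    then have "x\<^sup>2 \<le> r\<^sup>2"
      using power_mono[of "\<bar>x\<bar>" r 2] by simp
    then show "0 \<le> Pk k x" using Pk \<open>0 \<le> Q\<close> by simp
  qed
qed

lemma invariant_set_Lambdak:
  assumes "k \<ge> 2"
  shows "invariant_set (Xk k) (Yk k) (Lambdak k)"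
proof -
  have "Xk k = slope_field 1 (deriv (Pk k))" "Yk k = slope_field (-1) (deriv (Pk k))"
    by (auto simp: Xk_def Yk_def slope_field_def fun_eq_iff)
  moreover have "Lambdak k = mirrored_graph (Pk k)"
    using Pk_nonneg_iff[OF assms] by (auto simp: Lambdak_def mirrored_graph_def)
  ultimately show ?thesis
    using mirrored_graph_invariant[OF Pk_has_derivative] by simp
qed

lemma invariant_set_Lambdainf: "invariant_set Xinf Yinf Lambdainf"
proof -
  have "(Pinf has_real_derivative 2 * sin (2 * pi * x)) (at x)" for x
    unfolding Pinf_def by (auto intro!: derivative_eq_intros)
  moreover have "Xinf = slope_field 1 (\<lambda>x. 2 * sin (2 * pi * x))"
    "Yinf = slope_field (-1) (\<lambda>x. 2 * sin (2 * pi * x))"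
    by (auto simp: Xinf_def Yinf_def slope_field_def fun_eq_iff)
  moreover have "Lambdainf = mirrored_graph Pinf"
    by (auto simp: Lambdainf_def mirrored_graph_def Pinf_def)
  ultimately show ?thesis
    using mirrored_graph_invariant by metis
qed

theorem mainTheorem10:
  shows "(\<forall>k::nat. k \<ge> 2 \<longrightarrow> invariant_set (Xk k) (Yk k) (Lambdak k))
         \<and> invariant_set Xinf Yinf Lambdainf"
  using invariant_set_Lambdak invariant_set_Lambdainf by blast

end
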